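(* Let $L$ be a perfectoid field of characteristic $0$ contained in a complete algebraically closed field $C$, and let $\mathcal D_\infty=\{|q|<1\}\subseteq\mathrm{Spa}(L\langle q^{1/p^\infty}\rangle,\mathcal O_L\langle q^{1/p^\infty}\rangle)$. If $f\in\mathcal O(\mathcal D_\infty)$ takes the constant value $a\in L$ at all $(C,\mathcal O_C)$-points of $\mathcal D_\infty$, then $f=a$ in $\mathcal O(\mathcal D_\infty)$.
   Context: $\mathcal O(\mathcal D_\infty)$ consists of series $\sum_{n\in\mathbb Z[1/p]_{\ge0}}a_nq^n$ with $a_n\in L$, $|a_n|r^n\to0$ for all $0\le r<1$, and such that for every $\delta>0$ and every bounded interval $I$ only finitely many $n\in I$ have $|a_n|>\delta$. $(C,\mathcal O_C)$-points of $\mathcal D_\infty$ correspond to compatible systems $(x^{1/p^i})_i$ of $p$-power roots of topologically nilpotent $x\in\mathcal O_C$. (In the paper $L=L_x$ is the field of definition of the Tate curve at a cusp.) *)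

theory Defs
  imports Complex_Main "HOL-Computational_Algebra.Polynomial"
begin

definition nonarch_abs :: "('c::field \<Rightarrow> real) \<Rightarrow> bool" where
  "nonarch_abs v \<longleftrightarrow> (\<forall>x. 0 \<le> v x) \<and> (\<forall>x. v x = 0 \<longleftrightarrow> x = 0) \<and>
     (\<forall>x y. v (x * y) = v x * v y) \<and> (\<forall>x y. v (x + y) \<le> max (v x) (v y))"

definition v_cauchy :: "('c::field \<Rightarrow> real) \<Rightarrow> (nat \<Rightarrow> 'c) \<Rightarrow> bool" where
  "v_cauchy v X \<longleftrightarrow> (\<forall>e>0. \<exists>N. \<forall>m\<ge>N. \<forall>n\<ge>N. v (X m - X n) < e)"

definition v_lim :: "('c::field \<Rightarrow> real) \<Rightarrow> (nat \<Rightarrow> 'c) \<Rightarrow> 'c \<Rightarrow> bool" where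
  "v_lim v X l \<longleftrightarrow> (\<forall>e>0. \<exists>N. \<forall>n\<ge>N. v (X n - l) < e)"

definition v_complete_on :: "('c::field \<Rightarrow> real) \<Rightarrow> 'c set \<Rightarrow> bool" where
  "v_complete_on v S \<longleftrightarrow> (\<forall>X. (\<forall>n. X n \<in> S) \<longrightarrow> v_cauchy v X \<longrightarrow> (\<exists>l\<in>S. v_lim v X l))"

definition alg_closed :: "'c::field itself \<Rightarrow> bool" where
  "alg_closed _ \<longleftrightarrow> (\<forall>P::'c poly. 0 < degree P \<longrightarrow> (\<exists>z. poly P z = 0))"

definition is_subfield :: "'c::field set \<Rightarrow> bool" where
  "is_subfield L \<longleftrightarrow> 0 \<in> L \<and> 1 \<in> L \<and> (\<forall>x\<in>L. \<forall>y\<in>L. x + y \<in> L \<and> x * y \<in> L) \<and>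
     (\<forall>x\<in>L. - x \<in> L \<and> inverse x \<in> L)"

text \<open>L is a perfectoid field (with residue characteristic p) for the restriction of v:
  complete, non-discrete rank one valuation, residue characteristic p (|p| < 1),
  Frobenius surjective on O_L / p.\<close>
definition perfectoid_in :: "('c::field \<Rightarrow> real) \<Rightarrow> nat \<Rightarrow> 'c set \<Rightarrow> bool" where
  "perfectoid_in v p L \<longleftrightarrow> is_subfield L \<and> v_complete_on v L \<and> prime p \<and>
     v (of_nat p) < 1 \<and>
     (\<forall>e>0. \<exists>x\<in>L. 1 < v x \<and> v x < 1 + e) \<and>
     (\<forall>x\<in>L. v x \<le> 1 \<longrightarrow> (\<exists>y\<in>L. v y \<le> 1 \<and> v (x - y ^ p) \<le> v (of_nat p)))"

definition Zp_idx :: "nat \<Rightarrow> rat set" where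
  "Zp_idx p = {n. 0 \<le> n \<and> (\<exists>k::nat. \<exists>m::int. n = of_int m / of_nat (p ^ k))}"

text \<open>O(D_infinity): coefficient families a : Z[1/p]_{>=0} -> L (values off the index set are irrelevant).\<close>
definition O_Dinf :: "('c::field \<Rightarrow> real) \<Rightarrow> nat \<Rightarrow> 'c set \<Rightarrow> (rat \<Rightarrow> 'c) \<Rightarrow> bool" where
  "O_Dinf v p L a \<longleftrightarrow> (\<forall>n\<in>Zp_idx p. a n \<in> L) \<and>
     (\<forall>r::real. 0 \<le> r \<and> r < 1 \<longrightarrow> (\<forall>e>0. finite {n\<in>Zp_idx p. e \<le> v (a n) * r powr (of_rat n)})) \<and>
     (\<forall>d>0. \<forall>B::rat. finite {n\<in>Zp_idx p. n \<le> B \<and> d < v (a n)})"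

text \<open>(C, O_C)-points: compatible systems of p-power roots of a topologically nilpotent x = x 0.\<close>
definition Dinf_point :: "('c::field \<Rightarrow> real) \<Rightarrow> nat \<Rightarrow> (nat \<Rightarrow> 'c) \<Rightarrow> bool" where
  "Dinf_point v p x \<longleftrightarrow> v (x 0) < 1 \<and> (\<forall>i. x (Suc i) ^ p = x i)"

text \<open>x^n for n = m / p^k, computed as (x^(1/p^k))^m.\<close>
definition qpow :: "nat \<Rightarrow> (nat \<Rightarrow> 'c::field) \<Rightarrow> rat \<Rightarrow> 'c" where
  "qpow p x n = (let k = (LEAST k. \<exists>m::nat. n = of_nat m / of_nat (p ^ k))
                 in x k ^ nat \<lfloor>n * of_nat (p ^ k)\<rfloor>)"

definition v_has_sum :: "('c::field \<Rightarrow> real) \<Rightarrow> ('i \<Rightarrow> 'c) \<Rightarrow> 'i set \<Rightarrow> 'c \<Rightarrow> bool" where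
  "v_has_sum v g S s \<longleftrightarrow> (\<forall>e>0. \<exists>F. finite F \<and> F \<subseteq> S \<and>
     (\<forall>G. finite G \<and> F \<subseteq> G \<and> G \<subseteq> S \<longrightarrow> v (s - sum g G) < e))"

end

theory Submission
  imports Defs
begin

text \<open>
  Evaluating at the point all of whose p-power roots are 0 kills every term but the constant one,
  so f 0 = a and the remaining series sums to 0 at every point. Suppose some other coefficient
  f n0 were nonzero, and fix \<pi> with 0 < |\<pi>| = \<beta> < 1. At every radius R in [\<beta>^2, \<beta>] only the
  finitely many terms with |f n| \<beta>^n \<ge> |f n0| \<beta>^(2 n0) / 2 can compete with |f n0| R^n0, and two
  distinct terms |f n| R^n and |f m| R^m agree for at most one R. Among the infinitely many radii
  \<beta>^(1 + 1/p^j), each attained at a point built from p-power roots of \<pi>, some radius therefore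
  has a unique largest term. By the ultrametric inequality the series then has the absolute value
  of that term, which is positive: a contradiction.\<close>

section \<open>Ultrametric absolute values and unconditional sums\<close>

lemma v_has_sumD:
  assumes "v_has_sum v g S s" "0 < e"
  obtains F where "finite F" "F \<subseteq> S"
    "\<And>G. finite G \<Longrightarrow> F \<subseteq> G \<Longrightarrow> G \<subseteq> S \<Longrightarrow> v (s - sum g G) < e"
  using assms unfolding v_has_sum_def by meson

context
  fixes v :: "'c::field \<Rightarrow> real"
  assumes na: "nonarch_abs v"
begin

lemma v_nonneg: "0 \<le> v x"
  using na by (simp add: nonarch_abs_def)

lemma v_zero_iff: "v x = 0 \<longleftrightarrow> x = 0"
  using na by (simp add: nonarch_abs_def)

lemma v_mult: "v (x * y) = v x * v y"
  using na by (simp add: nonarch_abs_def)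

lemma v_add: "v (x + y) \<le> max (v x) (v y)"
  using na by (simp add: nonarch_abs_def)

lemma v_zero [simp]: "v 0 = 0"
  using v_zero_iff by simp

lemma v_pos: "x \<noteq> 0 \<Longrightarrow> 0 < v x"
  using v_nonneg[of x] v_zero_iff[of x] by simp

lemma v_one [simp]: "v 1 = 1"
proof -
  have "v 1 * v 1 = v 1 * 1"
    using v_mult[of 1 1] by simp
  then show ?thesis
    using v_pos[of 1] by (metis less_irrefl mult_left_cancel one_neq_zero)
qed

lemma v_power: "v (x ^ n) = v x ^ n"
  by (induction n) (simp_all add: v_mult)

lemma v_uminus [simp]: "v (- x) = v x"
proof -
  have "v (-1) * v (-1) = 1"
    using v_mult[of "-1" "-1"] by simp
  then have "(v (-1) - 1) * (v (-1) + 1) = 0"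
    by (simp add: algebra_simps)
  then have "v (-1) = 1"
    using v_nonneg[of "-1"] by auto
  then show ?thesis
    using v_mult[of "-1" x] by simp
qed

lemma v_inverse: "v (inverse x) = inverse (v x)"
proof (cases "x = 0")
  case False
  then have "v x * v (inverse x) = 1"
    using v_mult[of x "inverse x"] by simp
  then show ?thesis
    using inverse_unique by metis
qed simp

lemma v_add_dominant:
  assumes "v y < v x"
  shows "v (x + y) = v x"
proof -
  have "v x \<le> max (v (x + y)) (v y)"
    using v_add[of "x + y" "- y"] by simp
  moreover have "v (x + y) \<le> v x"
    using v_add[of x y] assms by simp
  ultimately show ?thesis
    using assms by (auto simp: max_def split: if_splits)
qed

lemma v_compatible_roots:
  assumes "0 < p" "\<forall>i. x (Suc i) ^ p = x i"
  shows "v (x k) = v (x 0) powr (1 / real p ^ k)"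
proof (induction k)
  case 0
  show ?case
    using v_pos[of "x 0"] by (cases "x 0 = 0") auto
next
  case (Suc k)
  let ?a = "v (x (Suc k))"
  have root: "?a ^ p = v (x k)"
    using assms(2) v_power by metis
  have "?a = v (x k) powr (1 / real p)"
  proof (cases "?a = 0")
    case True
    then show ?thesis
      using root assms(1) by (simp add: power_0_left)
  next
    case False
    then have "0 < ?a"
      using v_nonneg by (simp add: order_less_le)
    then have "v (x k) = ?a powr real p"
      using root by (simp add: powr_realpow)
    then show ?thesis
      using assms(1) \<open>0 < ?a\<close> by (simp add: powr_powr)
  qed
  also have "\<dots> = v (x 0) powr (1 / real p ^ Suc k)"
    using Suc by (simp add: powr_powr mult.commute)
  finally show ?case .
qed

lemma v_sum_less:
  assumes "finite H" "0 < T" "\<And>n. n \<in> H \<Longrightarrow> v (g n) < T"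
  shows "v (sum g H) < T"
  using assms
proof (induction H rule: finite_induct)
  case (insert x F)
  then have "v (g x) < T" "v (sum g F) < T"
    by simp_all
  then show ?case
    using v_add[of "g x" "sum g F"] insert.hyps by simp
qed simp

lemma v_sum_dominant:
  assumes "finite G" "k \<in> G" "\<And>n. n \<in> G - {k} \<Longrightarrow> v (g n) < v (g k)"
  shows "v (sum g G) = v (g k)"
proof -
  have split: "sum g G = g k + sum g (G - {k})"
    using assms(1,2) by (rule sum.remove)
  show ?thesis
  proof (cases "G - {k} = {}")
    case False
    then obtain m where "m \<in> G - {k}"
      by blast
    then have "0 < v (g k)"
      using assms(3) v_nonneg[of "g m"] by fastforce
    then have "v (sum g (G - {k})) < v (g k)"
      using assms by (intro v_sum_less) auto
    then show ?thesis
      using split v_add_dominant by metis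
  qed (metis split add.right_neutral sum.empty)
qed

lemma v_has_sum_remove:
  assumes "v_has_sum v g S s" "z \<in> S"
  shows "v_has_sum v g (S - {z}) (s - g z)"
  unfolding v_has_sum_def
proof (intro allI impI)
  fix e :: real
  assume "0 < e"
  then obtain F where F: "finite F" "F \<subseteq> S"
    "\<And>G. finite G \<Longrightarrow> F \<subseteq> G \<Longrightarrow> G \<subseteq> S \<Longrightarrow> v (s - sum g G) < e"
    using v_has_sumD[OF assms(1)] by blast
  have "v (s - g z - sum g G) < e" if "finite G" "F - {z} \<subseteq> G" "G \<subseteq> S - {z}" for G
  proof -
    have "sum g (insert z G) = g z + sum g G"
      using that(1,3) by (auto intro: sum.insert)
    moreover have "v (s - sum g (insert z G)) < e"
      using that assms(2) by (intro F(3)) auto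
    ultimately show ?thesis
      by (simp add: diff_diff_eq)
  qed
  then show "\<exists>F. finite F \<and> F \<subseteq> S - {z} \<and>
      (\<forall>G. finite G \<and> F \<subseteq> G \<and> G \<subseteq> S - {z} \<longrightarrow> v (s - g z - sum g G) < e)"
    using F(1,2) by (intro exI[of _ "F - {z}"]) auto
qed

lemma v_has_sum_zero_terms:
  assumes "v_has_sum v g S s" "\<forall>n\<in>S. g n = 0"
  shows "s = 0"
proof (rule ccontr)
  assume "s \<noteq> 0"
  then obtain F where "finite F" "F \<subseteq> S"
    "\<And>G. finite G \<Longrightarrow> F \<subseteq> G \<Longrightarrow> G \<subseteq> S \<Longrightarrow> v (s - sum g G) < v s"
    using v_has_sumD[OF assms(1) v_pos] by blast
  then have "v (s - sum g F) < v s"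
    by blast
  moreover have "sum g F = 0"
    using \<open>F \<subseteq> S\<close> assms(2) by (auto intro: sum.neutral)
  ultimately show False
    by simp
qed

lemma v_has_sum_dominant_term:
  assumes "v_has_sum v g S s" "k \<in> S" "g k \<noteq> 0"
    and "\<forall>n\<in>S - {k}. v (g n) < v (g k)"
  shows "v s = v (g k)"
proof -
  obtain F where F: "finite F" "F \<subseteq> S"
    "\<And>G. finite G \<Longrightarrow> F \<subseteq> G \<Longrightarrow> G \<subseteq> S \<Longrightarrow> v (s - sum g G) < v (g k)"
    using v_has_sumD[OF assms(1) v_pos[OF assms(3)]] by blast
  let ?G = "insert k F"
  have "v (sum g ?G) = v (g k)"
    using F(1,2) assms(4) by (intro v_sum_dominant) auto
  moreover have "v (s - sum g ?G) < v (g k)"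
    using F(1,2) assms(2) by (intro F(3)) auto
  ultimately have "v (sum g ?G + (s - sum g ?G)) = v (g k)"
    using v_add_dominant by metis
  then show ?thesis
    by simp
qed

end

section \<open>Fractional powers at points of D_\<infinity>\<close>

lemma zero_in_Zp_idx: "0 \<in> Zp_idx p"
  unfolding Zp_idx_def by (auto intro!: exI[of _ 0])

lemma Zp_idx_nonneg: "n \<in> Zp_idx p \<Longrightarrow> 0 \<le> n"
  unfolding Zp_idx_def by simp

lemma qpow_eq_power:
  assumes "1 < p" "n \<in> Zp_idx p"
  obtains k m :: nat where "n = of_nat m / of_nat (p ^ k)" "qpow p x n = x k ^ m"
proof -
  from assms(2) obtain k' and m' :: int where "0 \<le> n" and n: "n = of_int m' / of_nat (p ^ k')"
    unfolding Zp_idx_def by blast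
  moreover have "of_int m' = n * of_nat (p ^ k')"
    using n assms(1) by simp
  ultimately have "0 \<le> m'"
    by (metis of_int_0_le_iff of_nat_0_le_iff mult_nonneg_nonneg)
  then have "\<exists>m::nat. n = of_nat m / of_nat (p ^ k')"
    using n by (intro exI[of _ "nat m'"]) simp
  define k where "k = (LEAST k. \<exists>m::nat. n = of_nat m / of_nat (p ^ k))"
  have "\<exists>m::nat. n = of_nat m / of_nat (p ^ k)"
    unfolding k_def by (rule LeastI) fact
  then obtain m :: nat where m: "n = of_nat m / of_nat (p ^ k)"
    by blast
  then have "nat \<lfloor>n * of_nat (p ^ k)\<rfloor> = m"
    using assms(1) by simp
  then show ?thesis
    using that m unfolding qpow_def Let_def k_def[symmetric] by simp
qed

lemma qpow_0 [simp]:
  assumes "1 < p"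
  shows "qpow p x 0 = 1"
proof -
  obtain k m :: nat where "(0::rat) = of_nat m / of_nat (p ^ k)" "qpow p x 0 = x k ^ m"
    using qpow_eq_power[OF assms zero_in_Zp_idx] .
  then show ?thesis
    using assms by simp
qed

lemma qpow_zero_point:
  assumes "1 < p" "n \<in> Zp_idx p" "n \<noteq> 0"
  shows "qpow p (\<lambda>_. 0::'c::field) n = 0"
proof -
  obtain k m :: nat where "n = of_nat m / of_nat (p ^ k)" "qpow p (\<lambda>_. 0::'c) n = 0 ^ m"
    using qpow_eq_power[OF assms(1,2)] .
  then show ?thesis
    using assms(3) by auto
qed

lemma v_qpow:
  assumes "nonarch_abs v" "1 < p" "n \<in> Zp_idx p" "\<forall>i. x (Suc i) ^ p = x i" "0 < v (x 0)"
  shows "v (qpow p x n) = v (x 0) powr of_rat n"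
proof -
  obtain k m :: nat where km: "n = of_nat m / of_nat (p ^ k)" "qpow p x n = x k ^ m"
    using qpow_eq_power[OF assms(2,3)] .
  have "0 < p"
    using assms(2) by simp
  then have "v (qpow p x n) = (v (x 0) powr (1 / real p ^ k)) ^ m"
    using km v_power[OF assms(1)] v_compatible_roots[OF assms(1) _ assms(4), of k] by simp
  also have "\<dots> = (v (x 0) powr (1 / real p ^ k)) powr real m"
    using assms(5) by (simp add: powr_realpow)
  also have "\<dots> = v (x 0) powr (real m / real p ^ k)"
    by (simp add: powr_powr)
  also have "real m / real p ^ k = of_rat n"
    using km by (simp add: of_rat_divide of_rat_power)
  finally show ?thesis .
qed

lemma alg_closed_ex_root:
  assumes "alg_closed TYPE('c::field)" "0 < p"
  shows "\<exists>z::'c. z ^ p = y"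
proof -
  let ?P = "monom (1::'c) p - [:y:]"
  have "degree ?P = p"
    using assms(2) by (metis degree_add_eq_left degree_pCons_0 diff_conv_add_uminus degree_minus
        degree_monom_eq one_neq_zero)
  then obtain z where "poly ?P z = 0"
    using assms unfolding alg_closed_def by metis
  then show ?thesis by (auto simp: poly_monom)
qed

primrec root_tower :: "nat \<Rightarrow> 'c::field \<Rightarrow> nat \<Rightarrow> 'c" where
  "root_tower p y 0 = y"
| "root_tower p y (Suc i) = (SOME z. z ^ p = root_tower p y i)"

lemma root_tower_Suc_power:
  assumes "alg_closed TYPE('c::field)" "0 < p"
  shows "root_tower p (y::'c) (Suc i) ^ p = root_tower p y i"
  using someI_ex[OF alg_closed_ex_root[OF assms]] by simp

lemma Dinf_point_with_radius:
  assumes "nonarch_abs v" "alg_closed TYPE('c::field)" "1 < p" "0 < v \<pi>" "v (\<pi>::'c) < 1"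
  obtains X where "Dinf_point v p X" "v (X 0) = v \<pi> powr (1 + 1 / real p ^ j)"
proof
  have tower: "\<forall>i. root_tower p y (Suc i) ^ p = root_tower p y i" for y :: 'c
    using root_tower_Suc_power[OF assms(2)] assms(3) by simp
  let ?y = "root_tower p \<pi>"
  let ?X = "root_tower p (\<pi> * ?y j)"
  have "v (?X 0) = v \<pi> * v (?y j)"
    using v_mult[OF assms(1)] by simp
  also have "v (?y j) = v \<pi> powr (1 / real p ^ j)"
    using v_compatible_roots[OF assms(1) _ tower[of \<pi>], of j] assms(3) by simp
  also have "v \<pi> * v \<pi> powr (1 / real p ^ j) = v \<pi> powr (1 + 1 / real p ^ j)"
    using assms(4) by (simp add: powr_add)
  finally show radius: "v (?X 0) = v \<pi> powr (1 + 1 / real p ^ j)" .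
  have "v \<pi> powr (1 + 1 / real p ^ j) \<le> v \<pi> powr 1"
    using assms(4,5) by (intro powr_mono') auto
  then have "v (?X 0) < 1"
    using radius assms(4,5) by simp
  then show "Dinf_point v p ?X"
    unfolding Dinf_point_def using tower by blast
qed

section \<open>Radii with a strictly dominant term\<close>

lemma powr_tie_unique:
  fixes a b r s x y :: real
  assumes "0 < a" "0 < b" "x \<noteq> y" "0 < r" "0 < s"
    and "a * r powr x = b * r powr y" "a * s powr x = b * s powr y"
  shows "r = s"
proof -
  have "ln a + x * ln r = ln b + y * ln r" "ln a + x * ln s = ln b + y * ln s"
    using arg_cong[OF assms(6), of ln] arg_cong[OF assms(7), of ln] assms(1,2,4,5)
    by (simp_all add: ln_mult)
  then have "(x - y) * ln r = (x - y) * ln s"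
    by (simp add: algebra_simps)
  then have "ln r = ln s"
    using assms(3) by simp
  then show ?thesis
    using assms(4,5) by simp
qed

lemma finite_tie_indices:
  fixes w :: "rat \<Rightarrow> real" and R :: "nat \<Rightarrow> real"
  assumes "finite K" "\<forall>n\<in>K. 0 < w n" "inj R" "\<forall>j. 0 < R j"
  shows "finite {j. \<exists>n\<in>K. \<exists>m\<in>K. n \<noteq> m \<and> w n * R j powr of_rat n = w m * R j powr of_rat m}"
proof -
  let ?tie = "\<lambda>n m. {j. w n * R j powr of_rat n = w m * R j powr of_rat m}"
  have finite_tie: "finite (?tie n m)" if "n \<in> K" "m \<in> K" "n \<noteq> m" for n m
  proof -
    have unique: "j1 = j2" if "j1 \<in> ?tie n m" "j2 \<in> ?tie n m" for j1 j2
    proof -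
      have "(of_rat n :: real) \<noteq> of_rat m"
        using \<open>n \<noteq> m\<close> by simp
      then have "R j1 = R j2"
        using powr_tie_unique[of "w n" "w m" "of_rat n" "of_rat m" "R j1" "R j2"] that
          \<open>n \<in> K\<close> \<open>m \<in> K\<close> assms(2,4) by blast
      then show ?thesis
        by (rule injD[OF assms(3)])
    qed
    show ?thesis
    proof (cases "?tie n m = {}")
      case False
      then show ?thesis
        using is_singletonI'[OF False unique] by (auto simp: is_singleton_def)
    qed simp
  qed
  have "{j. \<exists>n\<in>K. \<exists>m\<in>K. n \<noteq> m \<and> w n * R j powr of_rat n = w m * R j powr of_rat m}
      = (\<Union>(n, m)\<in>{(n, m) \<in> K \<times> K. n \<noteq> m}. ?tie n m)"
    by auto
  moreover have "finite {(n, m) \<in> K \<times> K. n \<noteq> m}"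
    using assms(1) by (auto intro: finite_subset[of _ "K \<times> K"])
  ultimately show ?thesis
    using finite_tie by auto
qed

lemma inj_radii:
  fixes \<beta> :: real
  assumes "0 < \<beta>" "\<beta> < 1" "1 < p"
  shows "inj (\<lambda>j::nat. \<beta> powr (1 + 1 / real p ^ j))"
proof (rule injI)
  fix i j :: nat
  assume "\<beta> powr (1 + 1 / real p ^ i) = \<beta> powr (1 + 1 / real p ^ j)"
  then have "real p ^ i = real p ^ j"
    using assms(1,2) powr_inj by fastforce
  then show "i = j"
    using assms(3) by (simp add: power_inject_exp)
qed

lemma radii_bounds:
  fixes \<beta> :: real
  assumes "0 < \<beta>" "\<beta> < 1" "0 < p"
  shows "\<beta> ^ 2 \<le> \<beta> powr (1 + 1 / real p ^ j) \<and> \<beta> powr (1 + 1 / real p ^ j) \<le> \<beta>"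
proof -
  have "1 / real p ^ j \<le> 1"
    using assms(3) by (simp add: divide_le_eq_1 one_le_power)
  then have "\<beta> powr 2 \<le> \<beta> powr (1 + 1 / real p ^ j)" "\<beta> powr (1 + 1 / real p ^ j) \<le> \<beta> powr 1"
    using assms(1,2) by (intro powr_mono'; simp)+
  then show ?thesis
    using assms(1) by (simp add: powr_realpow)
qed

lemma ex_strict_max_if_finite_core:
  fixes t :: "'a \<Rightarrow> 'b::linorder"
  assumes "finite K" "K \<subseteq> S" "inj_on t K" "k \<in> K" "\<forall>n\<in>S - K. t n < t k"
  obtains n1 where "n1 \<in> K" "\<forall>n\<in>S - {n1}. t n < t n1"
proof -
  obtain n1 where n1: "n1 \<in> K" "Max (t ` K) = t n1"
    using obtains_MAX[OF assms(1)] assms(4) by blast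
  have max: "t n \<le> t n1" if "n \<in> K" for n
    using n1(2) Max_ge[of "t ` K" "t n"] assms(1) that by simp
  have "t n < t n1" if "n \<in> S - {n1}" for n
  proof (cases "n \<in> K")
    case True
    then have "t n \<noteq> t n1"
      using assms(3) n1(1) that by (auto dest: inj_onD)
    then show ?thesis
      using max[OF True] by simp
  next
    case False
    then have "t n < t k"
      using assms(5) that by blast
    then show ?thesis
      using max[OF assms(4)] by simp
  qed
  then show ?thesis
    using that n1(1) by blast
qed

lemma exists_radius_with_strict_max_term:
  fixes w :: "rat \<Rightarrow> real" and R :: "nat \<Rightarrow> real" and \<beta> :: real
  assumes S_nonneg: "\<forall>n\<in>S. 0 \<le> n" and w_nonneg: "\<forall>n. 0 \<le> w n"
    and \<beta>: "0 < \<beta>" "\<beta> < 1"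
    and converges: "\<forall>e>0. finite {n\<in>S. e \<le> w n * \<beta> powr of_rat n}"
    and m: "m \<in> S" "0 < w m"
    and R: "inj R" "\<forall>j. \<beta> ^ 2 \<le> R j \<and> R j \<le> \<beta>"
  obtains j n1 where "n1 \<in> S" "0 < w n1 * R j powr of_rat n1"
    "\<forall>n\<in>S - {n1}. w n * R j powr of_rat n < w n1 * R j powr of_rat n1"
proof -
  define \<theta> where "\<theta> = w m * (\<beta> ^ 2) powr of_rat m / 2"
  have \<theta>_pos: "0 < \<theta>"
    unfolding \<theta>_def using m(2) \<beta>(1) by simp
  have R_pos: "0 < R j" for j
    using R(2) \<beta>(1) by (meson order_less_le_trans zero_less_power)
  have R_powr_le: "R j powr of_rat n \<le> \<beta> powr of_rat n" if "n \<in> S" for j n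
    using that S_nonneg R(2) R_pos[of j] by (intro powr_mono2) (auto simp: less_imp_le)
  have large_term: "2 * \<theta> \<le> w m * R j powr of_rat m" for j
    unfolding \<theta>_def using R(2) m S_nonneg \<beta>(1) by (auto intro!: mult_left_mono powr_mono2)
  define K where "K = {n\<in>S. \<theta> \<le> w n * \<beta> powr of_rat n \<and> 0 < w n}"
  have "finite K"
    using converges \<theta>_pos unfolding K_def by (rule_tac finite_subset[of _ "{n\<in>S. \<theta> \<le> w n * \<beta> powr of_rat n}"]) auto
  have "w m * R 0 powr of_rat m \<le> w m * \<beta> powr of_rat m"
    using R_powr_le[OF m(1)] m(2) by simp
  then have "\<theta> \<le> w m * \<beta> powr of_rat m"
    using large_term[of 0] \<theta>_pos by linarith
  then have "m \<in> K"
    unfolding K_def using m by simp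
  have outside_K: "w n * R j powr of_rat n < \<theta>" if "n \<in> S - K" for n j
  proof (cases "w n = 0")
    case False
    then have "w n * \<beta> powr of_rat n < \<theta>"
      using that w_nonneg unfolding K_def by (auto simp: order_less_le)
    moreover have "w n * R j powr of_rat n \<le> w n * \<beta> powr of_rat n"
      using R_powr_le that w_nonneg by (simp add: mult_left_mono)
    ultimately show ?thesis
      by simp
  qed (simp add: \<theta>_pos)
  let ?ties = "{j. \<exists>n\<in>K. \<exists>m\<in>K. n \<noteq> m \<and> w n * R j powr of_rat n = w m * R j powr of_rat m}"
  have "finite ?ties"
    by (rule finite_tie_indices[OF \<open>finite K\<close> _ R(1)]) (auto simp: K_def R_pos)
  from ex_new_if_finite[OF infinite_UNIV_nat this] obtain j where "j \<notin> ?ties" ..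
  define t where "t n = w n * R j powr of_rat n" for n
  have "inj_on t K"
    using \<open>j \<notin> ?ties\<close> unfolding t_def inj_on_def by blast
  moreover have "\<forall>n\<in>S - K. t n < t m"
  proof
    fix n
    assume "n \<in> S - K"
    then show "t n < t m"
      using outside_K[of n j] large_term[of j] \<theta>_pos unfolding t_def by simp
  qed
  ultimately obtain n1 where n1: "n1 \<in> K" "\<forall>n\<in>S - {n1}. t n < t n1"
    using ex_strict_max_if_finite_core[OF \<open>finite K\<close> _ _ \<open>m \<in> K\<close>] K_def by blast
  have "t m \<le> t n1"
    using n1(2) m(1) by (cases "m = n1") (auto simp: less_imp_le)
  then have "0 < t n1"
    using large_term[of j] \<theta>_pos unfolding t_def by simp
  then show ?thesis
    using n1 that[of n1 j] unfolding K_def t_def by blast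
qed

section \<open>Vanishing of the coefficients\<close>

lemma perfectoid_in_ex_pseudo_uniformizer:
  assumes "nonarch_abs v" "perfectoid_in v p L"
  obtains \<pi> where "\<pi> \<in> L" "0 < v \<pi>" "v \<pi> < 1"
proof -
  obtain u where "u \<in> L" "1 < v u"
    using assms(2) unfolding perfectoid_in_def by (meson zero_less_one)
  moreover have "inverse u \<in> L"
    using \<open>u \<in> L\<close> assms(2) unfolding perfectoid_in_def is_subfield_def by blast
  ultimately show ?thesis
    using that[of "inverse u"] v_inverse[OF assms(1)] by (simp add: inverse_less_1_iff)
qed

lemma O_Dinf_eq_0_if_sums_to_0:
  assumes na: "nonarch_abs v" and "alg_closed TYPE('c::field)" "1 < p"
    and \<pi>: "0 < v \<pi>" "v (\<pi>::'c) < 1"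
    and f: "O_Dinf v p L f"
    and sums: "\<forall>x. Dinf_point v p x \<longrightarrow> v_has_sum v (\<lambda>n. f n * qpow p x n) (Zp_idx p - {0}) 0"
    and n0: "n0 \<in> Zp_idx p - {0}"
  shows "f n0 = 0"
proof (rule ccontr)
  assume "f n0 \<noteq> 0"
  let ?R = "\<lambda>j::nat. v \<pi> powr (1 + 1 / real p ^ j)"
  obtain j n1 where n1: "n1 \<in> Zp_idx p - {0}" "0 < v (f n1) * ?R j powr of_rat n1"
    "\<forall>n\<in>Zp_idx p - {0} - {n1}. v (f n) * ?R j powr of_rat n < v (f n1) * ?R j powr of_rat n1"
  proof (rule exists_radius_with_strict_max_term[where w = "\<lambda>n. v (f n)" and \<beta> = "v \<pi>"
        and m = n0 and R = ?R])
    show "\<forall>e>0. finite {n \<in> Zp_idx p - {0}. e \<le> v (f n) * v \<pi> powr of_rat n}"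
    proof (intro allI impI)
      fix e :: real
      assume "0 < e"
      then have "finite {n \<in> Zp_idx p. e \<le> v (f n) * v \<pi> powr of_rat n}"
        using f \<pi> unfolding O_Dinf_def by auto
      then show "finite {n \<in> Zp_idx p - {0}. e \<le> v (f n) * v \<pi> powr of_rat n}"
        by (rule finite_subset[rotated]) auto
    qed
  qed (use n0 \<open>f n0 \<noteq> 0\<close> \<pi> assms(3) Zp_idx_nonneg v_nonneg[OF na] v_pos[OF na]
      inj_radii radii_bounds in auto)
  obtain X where X: "Dinf_point v p X" "v (X 0) = ?R j"
    using Dinf_point_with_radius[OF na assms(2,3) \<pi>] .
  have v_term: "v (f n * qpow p X n) = v (f n) * ?R j powr of_rat n" if "n \<in> Zp_idx p" for n
    using v_qpow[OF na assms(3) that] X \<pi>(1) v_mult[OF na] unfolding Dinf_point_def by simp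
  have "0 < v (f n1 * qpow p X n1)"
    using n1(1,2) v_term by simp
  then have "f n1 * qpow p X n1 \<noteq> 0"
    using v_zero[OF na] by force
  then have "v 0 = v (f n1 * qpow p X n1)"
    using n1(1,3) v_term
    by (intro v_has_sum_dominant_term[OF na sums[rule_format, OF X(1)]]) auto
  then show False
    using \<open>0 < v (f n1 * qpow p X n1)\<close> v_zero[OF na] by simp
qed

theorem mainTheorem15:
  fixes v :: "'c::field_char_0 \<Rightarrow> real" and L :: "'c set" and p :: nat
    and f :: "rat \<Rightarrow> 'c" and a :: 'c
  assumes "nonarch_abs v"
    and "v_complete_on v UNIV"
    and "alg_closed TYPE('c)"
    and "perfectoid_in v p L"
    and "O_Dinf v p L f"
    and "a \<in> L"
    and "\<forall>x. Dinf_point v p x \<longrightarrow> v_has_sum v (\<lambda>n. f n * qpow p x n) (Zp_idx p) a"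
  shows "f 0 = a \<and> (\<forall>n\<in>Zp_idx p. n \<noteq> 0 \<longrightarrow> f n = 0)"
proof -
  note na = assms(1)
  have p: "1 < p"
    using assms(4) prime_gt_1_nat unfolding perfectoid_in_def by blast
  have tail_sums: "v_has_sum v (\<lambda>n. f n * qpow p x n) (Zp_idx p - {0}) (a - f 0)"
    if "Dinf_point v p x" for x
    using v_has_sum_remove[OF na assms(7)[rule_format, OF that] zero_in_Zp_idx] p by simp
  have "Dinf_point v p (\<lambda>_. 0)"
    using v_zero[OF na] p by (simp add: Dinf_point_def)
  then have "a - f 0 = 0"
    using qpow_zero_point[OF p] by (intro v_has_sum_zero_terms[OF na tail_sums]) auto
  moreover obtain \<pi> where "0 < v \<pi>" "v \<pi> < 1"
    using perfectoid_in_ex_pseudo_uniformizer[OF na assms(4)] by blast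
  ultimately have "f n = 0" if "n \<in> Zp_idx p - {0}" for n
    using tail_sums that by (intro O_Dinf_eq_0_if_sums_to_0[OF na assms(3) p _ _ assms(5)]) auto
  then show ?thesis
    using \<open>a - f 0 = 0\<close> by simp
qed

end
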